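(* Assume that the pair $(C,A)$ is observable and that $0$ is in the interior of $\mathcal{K}_1$. Let $T>0$. Then there exist $R>0$ with $B(0,R)\subset\mathcal{K}_1$ and $\eta_1>0$ such that the following holds. Let $\delta\in C^\infty(\mathbb{R}^n,\mathbb{R})$ satisfy $\delta(0)=0$ and $\sup_{x\in\mathcal{K}_1}|\delta(x)|<\eta_1$, and let $(\hat x,\varepsilon,\xi,\omega)$ be the solution of $(\mathrm{CS}_\delta)$ with initial condition $(\hat x_0,\varepsilon_0,\xi_0,\omega_0)\in B(0,R)\times\mathbb{R}^n\times\mathcal{S}\times\mathbb{S}^{n-1}$. If $\hat x(t)\in B(0,R)$ for all $t\in[0,T]$, then the input $u:t\mapsto(\lambda+\delta)(\hat x(t))$ makes the system $\dot x=A_{u(t)}x+bu(t)$, $y=Cx$ observable in time $T$.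
   Context: Let $n\ge1$, $A,B\in\mathrm{End}(\mathbb{R}^n)$, $C\in\mathcal{L}(\mathbb{R}^n,\mathbb{R})$, $b\in\mathbb{R}^n$, $A_u=A+uB$. $(C,A)$ is observable if the matrix with rows $C,CA,\dots,CA^{n-1}$ has rank $n$. An input $u$ makes the system $\dot x=A_{u(t)}x+bu(t)$, $y=Cx$ observable in time $T$ if any two solutions with equal outputs on $[0,T]$ coincide on $[0,T]$. Let $\lambda\in C^\infty(\mathbb{R}^n,\mathbb{R})$, $\lambda(0)=0$, be such that $0$ is an asymptotically stable equilibrium of $x\mapsto A_{\lambda(x)}x+b\lambda(x)$ with open domain of attraction $D(\lambda)$. Let $\mathcal{S}$ be a finite-dimensional manifold, $L:\mathcal{S}\to\mathcal{L}(\mathbb{R},\mathbb{R}^n)$, $f(\cdot,u)$ a vector field on $\mathcal{S}$ for each $u\in\mathbb{R}$. For $\delta\in C^\infty(\mathbb{R}^n,\mathbb{R})$, $(\mathrm{CS}_\delta)$ is: $\dot{\hat x}=A_{(\lambda+\delta)(\hat x)}\hat x+b(\lambda+\delta)(\hat x)-L(\xi)C\varepsilon$, $\dot\varepsilon=(A_{(\lambda+\delta)(\hat x)}-L(\xi)C)\varepsilon$, $\dot\xi=f(\xi,(\lambda+\delta)(\hat x))$, $\dot\omega=A_{(\lambda+\delta)(\hat x)}\omega$. $\mathcal{K}=\mathcal{K}_1\times\mathcal{K}_2\times\mathcal{K}_3$ is a semi-algebraic compact subset of $D(\lambda)\times\mathbb{R}^n\times\mathcal{S}$. *)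

theory Defs
  imports "HOL-Analysis.Analysis"
begin

coinductive Cinf :: "('a::euclidean_space \<Rightarrow> real) \<Rightarrow> bool" where
  "(\<And>x. f differentiable (at x)) \<Longrightarrow>
   (\<And>e. e \<in> Basis \<Longrightarrow> Cinf (\<lambda>x. frechet_derivative f (at x) e)) \<Longrightarrow> Cinf f"

inductive poly_fun :: "(real^'n \<Rightarrow> real) \<Rightarrow> bool" where
  pf_const: "poly_fun (\<lambda>x. c)"
| pf_coord: "poly_fun (\<lambda>x. x $ i)"
| pf_add: "poly_fun p \<Longrightarrow> poly_fun q \<Longrightarrow> poly_fun (\<lambda>x. p x + q x)"
| pf_mult: "poly_fun p \<Longrightarrow> poly_fun q \<Longrightarrow> poly_fun (\<lambda>x. p x * q x)"

inductive semialgebraic :: "(real^'n) set \<Rightarrow> bool" where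
  sa_eq: "poly_fun p \<Longrightarrow> semialgebraic {x. p x = 0}"
| sa_pos: "poly_fun p \<Longrightarrow> semialgebraic {x. 0 < p x}"
| sa_union: "semialgebraic S \<Longrightarrow> semialgebraic T \<Longrightarrow> semialgebraic (S \<union> T)"
| sa_compl: "semialgebraic S \<Longrightarrow> semialgebraic (UNIV - S)"

definition matpow :: "real^'n^'n \<Rightarrow> nat \<Rightarrow> real^'n^'n" where
  "matpow M k = ((\<lambda>N. M ** N) ^^ k) (mat 1)"

definition Au :: "real^'n^'n \<Rightarrow> real^'n^'n \<Rightarrow> real \<Rightarrow> real^'n^'n" where
  "Au A B u = A + u *\<^sub>R B"

text \<open>(C,A) observable: the matrix with rows C, CA, ..., CA^(n-1) has rank n
  (rank = dimension of the span of its rows). C is a row vector, y = C \<bullet> x.\<close>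
definition observable_pair :: "real^'n \<Rightarrow> real^'n^'n \<Rightarrow> bool" where
  "observable_pair C A \<longleftrightarrow>
     dim ((\<lambda>k. C v* matpow A k) ` {..<CARD('n)}) = CARD('n)"

definition ctrl_sol :: "real^'n^'n \<Rightarrow> real^'n^'n \<Rightarrow> real^'n \<Rightarrow> (real \<Rightarrow> real) \<Rightarrow> real
    \<Rightarrow> (real \<Rightarrow> real^'n) \<Rightarrow> bool" where
  "ctrl_sol A B b u T x \<longleftrightarrow>
     (\<forall>t\<in>{0..T}. (x has_vector_derivative (Au A B (u t) *v x t + u t *\<^sub>R b)) (at t within {0..T}))"

definition observable_input :: "real^'n^'n \<Rightarrow> real^'n^'n \<Rightarrow> real^'n \<Rightarrow> real^'n
    \<Rightarrow> (real \<Rightarrow> real) \<Rightarrow> real \<Rightarrow> bool" where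
  "observable_input A B b C u T \<longleftrightarrow>
     (\<forall>x1 x2. ctrl_sol A B b u T x1 \<and> ctrl_sol A B b u T x2 \<and>
        (\<forall>t\<in>{0..T}. C \<bullet> x1 t = C \<bullet> x2 t) \<longrightarrow> (\<forall>t\<in>{0..T}. x1 t = x2 t))"

definition cl_field :: "real^'n^'n \<Rightarrow> real^'n^'n \<Rightarrow> real^'n \<Rightarrow> (real^'n \<Rightarrow> real)
    \<Rightarrow> real^'n \<Rightarrow> real^'n" where
  "cl_field A B b lam x = Au A B (lam x) *v x + lam x *\<^sub>R b"

definition fwd_sol :: "('a::real_normed_vector \<Rightarrow> 'a) \<Rightarrow> (real \<Rightarrow> 'a) \<Rightarrow> bool" where
  "fwd_sol F x \<longleftrightarrow> (\<forall>t\<ge>0. (x has_vector_derivative F (x t)) (at t within {0..}))"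

definition asympt_stable_origin :: "('a::real_normed_vector \<Rightarrow> 'a) \<Rightarrow> bool" where
  "asympt_stable_origin F \<longleftrightarrow>
     F 0 = 0 \<and>
     (\<forall>e>0. \<exists>d>0. \<forall>x0. norm x0 < d \<longrightarrow>
        (\<exists>x. x 0 = x0 \<and> fwd_sol F x) \<and>
        (\<forall>x. x 0 = x0 \<and> fwd_sol F x \<longrightarrow> (\<forall>t\<ge>0. norm (x t) < e))) \<and>
     (\<exists>r>0. \<forall>x0. norm x0 < r \<longrightarrow>
        (\<forall>x. x 0 = x0 \<and> fwd_sol F x \<longrightarrow> (x \<longlongrightarrow> 0) at_top))"

definition dom_attr :: "('a::real_normed_vector \<Rightarrow> 'a) \<Rightarrow> 'a set" where
  "dom_attr F = {x0. \<exists>x. x 0 = x0 \<and> fwd_sol F x \<and> (x \<longlongrightarrow> 0) at_top}"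

end

theory Submission
  imports Defs
begin

text \<open>
  Observability is an open condition on the input. If two solutions for an input u have the
  same output, their difference e solves e' = (A + u B) e with C e = 0. By variation of
  constants, |e(t) - exp(t A) e(0)| is bounded by a constant times sup |u| * max |e|, while
  observability of (C, A) and compactness of the unit sphere give c |e(0)| <= |C exp(t A) e(0)|
  for some t in [0, T] and a constant c > 0 independent of e(0). Together these give
  max |e| <= max |e| / 2 once sup |u| is small enough, so e = 0.
  The closed-loop input (lambda + delta)(x_hat) is small as long as x_hat stays in a small ball
  around 0 and delta is uniformly small on K1.
\<close>

text \<open>
  Square matrices do not form a normed algebra in HOL-Analysis, so the matrix exponential is
  taken in this copy of the bounded endomorphisms of a Euclidean space, with composition as
  product.
\<close>

typedef (overloaded) 'a endo = "UNIV :: ('a::euclidean_space \<Rightarrow>\<^sub>L 'a) set" ..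

setup_lifting type_definition_endo

instantiation endo :: (euclidean_space) real_vector
begin

lift_definition zero_endo :: "'a endo" is 0 .
lift_definition plus_endo :: "'a endo \<Rightarrow> 'a endo \<Rightarrow> 'a endo" is "(+)" .
lift_definition minus_endo :: "'a endo \<Rightarrow> 'a endo \<Rightarrow> 'a endo" is "(-)" .
lift_definition uminus_endo :: "'a endo \<Rightarrow> 'a endo" is uminus .
lift_definition scaleR_endo :: "real \<Rightarrow> 'a endo \<Rightarrow> 'a endo" is scaleR .

instance
  by standard (transfer; simp add: algebra_simps)+

end

instantiation endo :: (euclidean_space) real_normed_algebra_1
begin

lift_definition one_endo :: "'a endo" is id_blinfun .
lift_definition times_endo :: "'a endo \<Rightarrow> 'a endo \<Rightarrow> 'a endo" is "(o\<^sub>L)" .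
lift_definition norm_endo :: "'a endo \<Rightarrow> real" is norm .
lift_definition sgn_endo :: "'a endo \<Rightarrow> 'a endo" is sgn .
lift_definition dist_endo :: "'a endo \<Rightarrow> 'a endo \<Rightarrow> real" is dist .

definition uniformity_endo :: "('a endo \<times> 'a endo) filter" where
  "uniformity_endo = (INF e\<in>{0<..}. principal {(x, y). dist x y < e})"

definition open_endo :: "'a endo set \<Rightarrow> bool" where
  "open_endo U = (\<forall>x\<in>U. \<forall>\<^sub>F (x', y) in uniformity. x' = x \<longrightarrow> y \<in> U)"

instance
proof
  fix x y :: "'a endo" and a :: real
  show "(0::'a endo) \<noteq> 1" by transfer (metis norm_blinfun_id norm_zero zero_neq_one)
  show "dist x y = norm (x - y)" by transfer (rule dist_norm)
  show "sgn x = x /\<^sub>R norm x" by transfer (rule sgn_div_norm)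
  show "norm x = 0 \<longleftrightarrow> x = 0" by transfer simp
  show "norm (x + y) \<le> norm x + norm y" by transfer (rule norm_triangle_ineq)
  show "norm (a *\<^sub>R x) = \<bar>a\<bar> * norm x" by transfer simp
  show "norm (x * y) \<le> norm x * norm y" by transfer (rule norm_blinfun_compose)
  show "norm (1::'a endo) = 1" by transfer (rule norm_blinfun_id)
  show "uniformity = (INF e\<in>{0<..}. principal {(x, y). dist (x::'a endo) y < e})"
    by (rule uniformity_endo_def)
  show "open U = (\<forall>x\<in>U. \<forall>\<^sub>F (x', y) in uniformity. x' = x \<longrightarrow> y \<in> U)" for U :: "'a endo set"
    by (rule open_endo_def)
qed (transfer; auto intro!: blinfun_eqI
       simp: blinfun.add_left blinfun.add_right blinfun.scaleR_left blinfun.scaleR_right)+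

end

instance endo :: (euclidean_space) banach
proof
  fix X :: "nat \<Rightarrow> 'a endo"
  assume "Cauchy X"
  then have "Cauchy (\<lambda>n. Rep_endo (X n))"
    by (simp add: Cauchy_def dist_endo.rep_eq)
  then obtain L where "(\<lambda>n. Rep_endo (X n)) \<longlonglongrightarrow> L"
    by (metis Cauchy_convergent convergent_def)
  then have "X \<longlonglongrightarrow> Abs_endo L"
    by (simp add: tendsto_iff dist_endo.rep_eq Abs_endo_inverse)
  then show "convergent X"
    by (auto simp: convergent_def)
qed

lift_definition endo_apply :: "'a::euclidean_space endo \<Rightarrow> 'a \<Rightarrow> 'a" is blinfun_apply .

lemma endo_apply_mult [simp]: "endo_apply (X * Y) v = endo_apply X (endo_apply Y v)"
  by transfer simp

lemma endo_apply_one [simp]: "endo_apply 1 v = v"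
  by transfer simp

lemma norm_endo_apply_le: "norm (endo_apply X v) \<le> norm X * norm v"
  by transfer (rule norm_blinfun)

lemma bounded_bilinear_endo_apply: "bounded_bilinear endo_apply"
proof
  fix X X' :: "'a endo" and v v' :: 'a and r :: real
  show "endo_apply (X + X') v = endo_apply X v + endo_apply X' v"
    by transfer (rule blinfun.add_left)
  show "endo_apply X (v + v') = endo_apply X v + endo_apply X v'"
    by transfer (rule blinfun.add_right)
  show "endo_apply (r *\<^sub>R X) v = r *\<^sub>R endo_apply X v"
    by transfer (rule blinfun.scaleR_left)
  show "endo_apply X (r *\<^sub>R v) = r *\<^sub>R endo_apply X v"
    by transfer (rule blinfun.scaleR_right)
  show "\<exists>K. \<forall>X v. norm (endo_apply X v) \<le> norm X * norm v * K"
    by (rule exI[of _ 1]) (simp add: norm_endo_apply_le)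
qed

lift_definition endo_of_matrix :: "real^'n^'n \<Rightarrow> (real^'n) endo" is "\<lambda>M. Blinfun ((*v) M)" .

lemma endo_apply_endo_of_matrix [simp]: "endo_apply (endo_of_matrix M) v = M *v v"
  by transfer (simp add: bounded_linear_Blinfun_apply)

lemma endo_apply_power_endo_of_matrix: "endo_apply (endo_of_matrix A ^ k) v = matpow A k *v v"
  by (induction k arbitrary: v) (simp_all add: matpow_def matrix_vector_mul_assoc)

lemma observable_pairD:
  fixes A :: "real^'n^'n"
  assumes obs: "observable_pair C A" and vanish: "\<And>k. C \<bullet> (matpow A k *v v) = 0"
  shows "v = 0"
proof -
  let ?rows = "(\<lambda>k. C v* matpow A k) ` {..<CARD('n)}"
  have "span ?rows = UNIV"
    using obs dim_eq_full[of ?rows] unfolding observable_pair_def by simp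
  moreover have "orthogonal v (C v* matpow A k)" for k
    unfolding orthogonal_def by (subst inner_commute) (simp add: dot_lmul_matrix vanish)
  ultimately have "orthogonal v v"
    using orthogonal_to_span[of v ?rows v] by blast
  then show ?thesis
    by (simp add: orthogonal_self)
qed

text \<open>No analyticity is needed: a function vanishing on [0, T] has vanishing derivative there,
  and the derivative of t \<mapsto> w \<bullet> X^k exp(t X) v is t \<mapsto> w \<bullet> X^(k+1) exp(t X) v.\<close>

lemma exp_output_vanishes_imp_power_output_vanishes:
  fixes X :: "'a::euclidean_space endo"
  assumes T: "T > 0" and vanish: "\<And>t. t \<in> {0..T} \<Longrightarrow> w \<bullet> endo_apply (exp (t *\<^sub>R X)) v = 0"
  shows "w \<bullet> endo_apply (X ^ k) v = 0"
proof -
  define y where "y k = (\<lambda>t. w \<bullet> endo_apply (X ^ k * exp (t *\<^sub>R X)) v)" for k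
  have y_deriv: "(y k has_vector_derivative y (Suc k) t) (at t within {0..T})" for k t
  proof -
    have "bounded_linear (\<lambda>Y. w \<bullet> endo_apply (X ^ k * Y) v)"
      using bounded_linear_compose[OF bounded_linear_inner_right
          bounded_linear_compose[OF bounded_bilinear.bounded_linear_left[OF bounded_bilinear_endo_apply]
            bounded_linear_mult_right]] .
    from bounded_linear.has_vector_derivative[OF this
        has_vector_derivative_at_within[OF exp_scaleR_has_vector_derivative_left[of X t]]]
    show ?thesis
      by (simp only: y_def power_Suc2 mult.assoc)
  qed
  have "\<forall>t\<in>{0..T}. y k t = 0" for k
  proof (induction k)
    case 0
    show ?case
      using vanish by (simp add: y_def)
  next
    case (Suc k)
    show ?case
    proof
      fix t assume t: "t \<in> {0..T}"
      have "(y k has_vector_derivative 0) (at t within {0..T})"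
        by (rule has_vector_derivative_transform[OF t _ has_vector_derivative_const])
          (use Suc.IH in blast)
      with y_deriv show "y (Suc k) t = 0"
        by (intro vector_derivative_unique_within_closed_interval[of 0 T t, unfolded cbox_interval])
          (use T t in auto)
    qed
  qed
  then have "y k 0 = 0"
    using T by simp
  then show ?thesis
    by (simp add: y_def)
qed

lemma observable_pair_exp_output_eq_0:
  fixes A :: "real^'n^'n"
  assumes obs: "observable_pair C A" and T: "T > 0"
    and vanish: "\<And>t. t \<in> {0..T} \<Longrightarrow> C \<bullet> endo_apply (exp (t *\<^sub>R endo_of_matrix A)) v = 0"
  shows "v = 0"
  using observable_pairD[OF obs] exp_output_vanishes_imp_power_output_vanishes[OF T vanish]
  by (simp add: endo_apply_power_endo_of_matrix)

lemma linear_family_lower_bound_on_sphere: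
  fixes y :: "'i \<Rightarrow> 'a::euclidean_space \<Rightarrow> real"
  assumes lin: "\<And>t. bounded_linear (y t)"
    and no_common_zero: "\<And>v. (\<And>t. t \<in> I \<Longrightarrow> y t v = 0) \<Longrightarrow> v = 0"
  shows "\<exists>c>0. \<forall>v\<in>sphere 0 1. \<exists>t\<in>I. c \<le> \<bar>y t v\<bar>"
proof (rule ccontr)
  assume "\<not> ?thesis"
  then have "\<forall>k. \<exists>v\<in>sphere 0 1. \<forall>t\<in>I. \<bar>y t v\<bar> < inverse (real (Suc k))"
    by (metis not_le inverse_positive_iff_positive of_nat_0_less_iff zero_less_Suc)
  then obtain w where w_sphere: "\<And>k. w k \<in> sphere 0 1"
    and w_small: "\<And>k t. t \<in> I \<Longrightarrow> \<bar>y t (w k)\<bar> < inverse (real (Suc k))"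
    by metis
  obtain l r where l: "l \<in> sphere 0 1" and r: "strict_mono r" and lim: "(w \<circ> r) \<longlonglongrightarrow> l"
    using compact_sphere[of "0::'a" 1, unfolded compact_eq_seq_compact_metric seq_compact_def]
      w_sphere by metis
  have "y t l = 0" if t: "t \<in> I" for t
  proof (rule LIMSEQ_unique)
    show "(\<lambda>k. y t (w (r k))) \<longlonglongrightarrow> y t l"
      using bounded_linear.tendsto[OF lin lim] by (simp add: o_def)
    have "norm (y t (w (r k))) \<le> inverse (real (Suc k))" for k
    proof -
      have "inverse (real (Suc (r k))) \<le> inverse (real (Suc k))"
        using seq_suble[OF r, of k] by (simp add: le_imp_inverse_le)
      then show ?thesis
        using w_small[OF t, of "r k"] unfolding real_norm_def by linarith
    qed
    then show "(\<lambda>k. y t (w (r k))) \<longlonglongrightarrow> 0"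
      by (intro Lim_null_comparison[OF _ LIMSEQ_inverse_real_of_nat] always_eventually) simp
  qed
  then have "l = 0"
    by (rule no_common_zero)
  with l show False
    by simp
qed

lemma linear_family_lower_bound:
  fixes y :: "'i \<Rightarrow> 'a::euclidean_space \<Rightarrow> real"
  assumes lin: "\<And>t. bounded_linear (y t)"
    and no_common_zero: "\<And>v. (\<And>t. t \<in> I \<Longrightarrow> y t v = 0) \<Longrightarrow> v = 0"
    and "I \<noteq> {}"
  obtains c where "c > 0" and "\<And>v. \<exists>t\<in>I. c * norm v \<le> \<bar>y t v\<bar>"
proof -
  have "\<exists>c>0. \<forall>v\<in>sphere 0 1. \<exists>t\<in>I. c \<le> \<bar>y t v\<bar>"
    by (rule linear_family_lower_bound_on_sphere[OF lin no_common_zero])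
  then obtain c where c: "c > 0" and c_le: "\<And>v. v \<in> sphere 0 1 \<Longrightarrow> \<exists>t\<in>I. c \<le> \<bar>y t v\<bar>"
    by blast
  have "\<exists>t\<in>I. c * norm v \<le> \<bar>y t v\<bar>" for v
  proof (cases "v = 0")
    case True
    then show ?thesis
      using \<open>I \<noteq> {}\<close> linear_simps(3)[OF lin] by auto
  next
    case False
    then obtain t where t: "t \<in> I" and "c \<le> \<bar>y t (v /\<^sub>R norm v)\<bar>"
      using c_le[of "v /\<^sub>R norm v"] by auto
    then have "c \<le> \<bar>y t v\<bar> / norm v"
      by (simp add: linear.scaleR[OF bounded_linear.linear[OF lin]] abs_mult divide_inverse_commute)
    then show ?thesis
      using t False by (auto simp: field_simps)
  qed
  with c show thesis
    by (rule that)
qed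

lemma observable_pair_exp_output_lower_bound:
  fixes A :: "real^'n^'n"
  assumes obs: "observable_pair C A" and T: "T > 0"
  obtains c where "c > 0"
    and "\<And>v. \<exists>t\<in>{0..T}. c * norm v \<le> \<bar>C \<bullet> endo_apply (exp (t *\<^sub>R endo_of_matrix A)) v\<bar>"
proof (rule linear_family_lower_bound)
  show "bounded_linear (\<lambda>v. C \<bullet> endo_apply (exp (t *\<^sub>R endo_of_matrix A)) v)" for t
    by (rule bounded_linear_inner_right_comp
        [OF bounded_bilinear.bounded_linear_right[OF bounded_bilinear_endo_apply]])
  show "v = 0" if "\<And>t. t \<in> {0..T} \<Longrightarrow> C \<bullet> endo_apply (exp (t *\<^sub>R endo_of_matrix A)) v = 0" for v
    by (rule observable_pair_exp_output_eq_0[OF obs T that])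
  show "{0..T} \<noteq> {}"
    using T by simp
qed (rule that)

lemma norm_exp_scaleR_le:
  fixes X :: "'a::{real_normed_algebra_1, banach}"
  assumes "t \<in> {0..T}"
  shows "norm (exp (t *\<^sub>R X)) \<le> exp (T * norm X)"
proof -
  have "norm (exp (t *\<^sub>R X)) \<le> exp (norm (t *\<^sub>R X))"
    by (rule norm_exp)
  also have "\<dots> \<le> exp (T * norm X)"
    using assms by (auto intro!: mult_right_mono)
  finally show ?thesis .
qed

lemma norm_diff_exp_solution_le:
  fixes X :: "'a::euclidean_space endo" and e g :: "real \<Rightarrow> 'a"
  assumes e': "\<And>t. t \<in> {0..T} \<Longrightarrow>
      (e has_vector_derivative endo_apply X (e t) + g t) (at t within {0..T})"
    and g: "\<And>t. t \<in> {0..T} \<Longrightarrow> norm (g t) \<le> \<beta>"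
    and \<tau>: "\<tau> \<in> {0..T}"
  shows "norm (e \<tau> - endo_apply (exp (\<tau> *\<^sub>R X)) (e 0)) \<le> exp (T * norm X) * \<beta> * T"
proof -
  define E where "E = (\<lambda>s. exp ((\<tau> - s) *\<^sub>R X))"
  define h where "h s = endo_apply (E s) (e s)" for s
  have E': "(E has_vector_derivative - (E s * X)) (at s within {0..\<tau>})" for s
  proof -
    have "((\<lambda>s. \<tau> - s) has_vector_derivative -1) (at s within {0..\<tau>})"
      by (auto intro!: derivative_eq_intros)
    from vector_diff_chain_within[OF this exp_scaleR_has_vector_derivative_right[of X]]
    show ?thesis
      by (simp add: E_def o_def)
  qed
  have h': "(h has_vector_derivative endo_apply (E s) (g s)) (at s within {0..\<tau>})"
    if s: "s \<in> {0..\<tau>}" for s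
  proof -
    have "(e has_vector_derivative endo_apply X (e s) + g s) (at s within {0..\<tau>})"
      using has_vector_derivative_within_subset[OF e'] s \<tau> by auto
    from bounded_bilinear.has_vector_derivative[OF bounded_bilinear_endo_apply E' this]
    show ?thesis
      by (simp add: h_def[abs_def] bounded_bilinear.add_right[OF bounded_bilinear_endo_apply]
          bounded_bilinear.minus_left[OF bounded_bilinear_endo_apply])
  qed
  have h'_bound: "norm (endo_apply (E s) (g s)) \<le> exp (T * norm X) * \<beta>" if s: "s \<in> {0..\<tau>}" for s
  proof -
    have "norm (endo_apply (E s) (g s)) \<le> norm (E s) * norm (g s)"
      by (rule norm_endo_apply_le)
    also have "\<dots> \<le> exp (T * norm X) * \<beta>"
      using s \<tau> norm_exp_scaleR_le[of "\<tau> - s" T X] by (intro mult_mono g) (auto simp: E_def)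
    finally show ?thesis .
  qed
  have "norm (h \<tau> - h 0) \<le> exp (T * norm X) * \<beta> * norm (\<tau> - 0)"
  proof (rule differentiable_bound[where f' = "\<lambda>s x. x *\<^sub>R endo_apply (E s) (g s)"])
    show "(h has_derivative (\<lambda>x. x *\<^sub>R endo_apply (E s) (g s))) (at s within {0..\<tau>})"
      if "s \<in> {0..\<tau>}" for s
      using h'[OF that] by (simp add: has_vector_derivative_def)
    show "onorm (\<lambda>x. x *\<^sub>R endo_apply (E s) (g s)) \<le> exp (T * norm X) * \<beta>"
      if "s \<in> {0..\<tau>}" for s
      using h'_bound[OF that] by (simp add: onorm_scaleR_left[OF bounded_linear_ident] onorm_id)
  qed (use \<tau> in auto)
  also have "\<dots> \<le> exp (T * norm X) * \<beta> * T"
    using \<tau> g[of 0] by (intro mult_left_mono mult_nonneg_nonneg) (auto intro: order_trans[OF norm_ge_zero])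
  finally show ?thesis
    by (simp add: h_def E_def)
qed

lemma Au_solution_norm_diff_exp_le:
  fixes A B :: "real^'n^'n" and e :: "real \<Rightarrow> real^'n"
  assumes small: "\<And>t. t \<in> {0..T} \<Longrightarrow> \<bar>u t\<bar> \<le> \<epsilon>"
    and e': "\<And>t. t \<in> {0..T} \<Longrightarrow> (e has_vector_derivative Au A B (u t) *v e t) (at t within {0..T})"
    and M: "\<And>t. t \<in> {0..T} \<Longrightarrow> norm (e t) \<le> M"
    and s: "s \<in> {0..T}"
  shows "norm (e s - endo_apply (exp (s *\<^sub>R endo_of_matrix A)) (e 0))
    \<le> exp (T * norm (endo_of_matrix A)) * (\<epsilon> * (norm (endo_of_matrix B) * M)) * T"
proof (rule norm_diff_exp_solution_le[OF _ _ s])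
  show "(e has_vector_derivative endo_apply (endo_of_matrix A) (e t) + u t *\<^sub>R (B *v e t))
      (at t within {0..T})" if "t \<in> {0..T}" for t
    using e'[OF that] by (simp add: Au_def matrix_vector_mult_add_rdistrib scaleR_matrix_vector_assoc)
  show "norm (u t *\<^sub>R (B *v e t)) \<le> \<epsilon> * (norm (endo_of_matrix B) * M)" if "t \<in> {0..T}" for t
  proof -
    have "norm (B *v e t) \<le> norm (endo_of_matrix B) * norm (e t)"
      using norm_endo_apply_le[of "endo_of_matrix B" "e t"] by simp
    also have "\<dots> \<le> norm (endo_of_matrix B) * M"
      using M[OF that] by (rule mult_left_mono) simp
    finally show ?thesis
      unfolding norm_scaleR by (rule mult_mono'[OF small[OF that]]) simp_all
  qed
qed

lemma zero_output_state_norm_le: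
  fixes A B :: "real^'n^'n" and C :: "real^'n" and e :: "real \<Rightarrow> real^'n" and T :: real
  defines "X \<equiv> exp (T * norm (endo_of_matrix A))"
  assumes lower: "\<And>v. \<exists>t\<in>{0..T}. c * norm v \<le> \<bar>C \<bullet> endo_apply (exp (t *\<^sub>R endo_of_matrix A)) v\<bar>"
    and c: "c > 0"
    and small: "\<And>t. t \<in> {0..T} \<Longrightarrow> \<bar>u t\<bar> \<le> \<epsilon>"
    and e': "\<And>t. t \<in> {0..T} \<Longrightarrow> (e has_vector_derivative Au A B (u t) *v e t) (at t within {0..T})"
    and zero_output: "\<And>t. t \<in> {0..T} \<Longrightarrow> C \<bullet> e t = 0"
    and M: "\<And>t. t \<in> {0..T} \<Longrightarrow> norm (e t) \<le> M"
    and t: "t \<in> {0..T}"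
  shows "norm (e t) \<le> \<epsilon> * M * (X * norm (endo_of_matrix B) * T * (X * norm C / c + 1))"
proof -
  let ?E = "\<lambda>t. endo_apply (exp (t *\<^sub>R endo_of_matrix A))"
  define D where "D = X * norm (endo_of_matrix B) * T"
  have duhamel: "norm (e s - ?E s (e 0)) \<le> \<epsilon> * M * D" if "s \<in> {0..T}" for s
    using Au_solution_norm_diff_exp_le[OF small e' M that] by (simp add: D_def X_def mult_ac)
  have X_bound: "norm (?E s v) \<le> X * norm v" if "s \<in> {0..T}" for s v
    unfolding X_def
    by (rule order_trans[OF norm_endo_apply_le mult_right_mono[OF norm_exp_scaleR_le[OF that]]]) simp
  obtain s where s: "s \<in> {0..T}" and lower_s: "c * norm (e 0) \<le> \<bar>C \<bullet> ?E s (e 0)\<bar>"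
    using lower by blast
  have "c * norm (e 0) \<le> \<bar>C \<bullet> (e s - ?E s (e 0))\<bar>"
    using lower_s zero_output[OF s] by (simp add: inner_diff_right)
  also have "\<dots> \<le> norm C * norm (e s - ?E s (e 0))"
    by (rule Cauchy_Schwarz_ineq2)
  also have "\<dots> \<le> norm C * (\<epsilon> * M * D)"
    using duhamel[OF s] by (rule mult_left_mono) simp
  finally have e0: "norm (e 0) \<le> norm C * (\<epsilon> * M * D) / c"
    using c by (simp add: pos_le_divide_eq mult.commute)
  have "norm (e t) \<le> norm (?E t (e 0)) + \<epsilon> * M * D"
    using duhamel[OF t] norm_triangle_sub[of "e t" "?E t (e 0)"] by linarith
  also have "\<dots> \<le> X * (norm C * (\<epsilon> * M * D) / c) + \<epsilon> * M * D"
    using X_bound[OF t, of "e 0"] mult_left_mono[OF e0, of X] by (simp add: X_def)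
  also have "\<dots> = \<epsilon> * M * (D * (X * norm C / c + 1))"
    by (simp add: algebra_simps)
  finally show ?thesis
    by (simp add: D_def)
qed

lemma zero_output_small_input_imp_zero:
  fixes A B :: "real^'n^'n" and C :: "real^'n"
  assumes obs: "observable_pair C A" and T: "T > 0"
  obtains \<epsilon> where "\<epsilon> > 0"
    and "\<And>u e t. (\<And>t. t \<in> {0..T} \<Longrightarrow> \<bar>u t\<bar> \<le> \<epsilon>) \<Longrightarrow>
      (\<And>t. t \<in> {0..T} \<Longrightarrow> (e has_vector_derivative Au A B (u t) *v e t) (at t within {0..T})) \<Longrightarrow>
      (\<And>t. t \<in> {0..T} \<Longrightarrow> C \<bullet> e t = 0) \<Longrightarrow> t \<in> {0..T} \<Longrightarrow> e t = 0"
proof -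
  obtain c where c: "c > 0"
    and lower: "\<And>v. \<exists>t\<in>{0..T}. c * norm v \<le> \<bar>C \<bullet> endo_apply (exp (t *\<^sub>R endo_of_matrix A)) v\<bar>"
    using observable_pair_exp_output_lower_bound[OF obs T] by blast
  define X where "X = exp (T * norm (endo_of_matrix A))"
  define K where "K = X * norm (endo_of_matrix B) * T * (X * norm C / c + 1)"
  define \<epsilon> where "\<epsilon> = 1 / (2 * (K + 1))"
  have "K \<ge> 0"
    using T c by (simp add: K_def X_def)
  then have \<epsilon>: "\<epsilon> > 0" "\<epsilon> * K \<le> 1 / 2"
    by (simp_all add: \<epsilon>_def field_simps)
  have "e t = 0"
    if small: "\<And>t. t \<in> {0..T} \<Longrightarrow> \<bar>u t\<bar> \<le> \<epsilon>"
      and e': "\<And>t. t \<in> {0..T} \<Longrightarrow> (e has_vector_derivative Au A B (u t) *v e t) (at t within {0..T})"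
      and zero_output: "\<And>t. t \<in> {0..T} \<Longrightarrow> C \<bullet> e t = 0"
      and t: "t \<in> {0..T}"
    for u e t
  proof -
    have "continuous_on {0..T} e"
      using e' has_vector_derivative_continuous continuous_on_eq_continuous_within by blast
    then have "\<exists>t\<^sub>m\<in>{0..T}. \<forall>s\<in>{0..T}. norm (e s) \<le> norm (e t\<^sub>m)"
      using continuous_attains_sup[of "{0..T}" "\<lambda>s. norm (e s)"] T by (simp add: continuous_on_norm)
    then obtain t\<^sub>m where t\<^sub>m: "t\<^sub>m \<in> {0..T}" and max: "\<And>s. s \<in> {0..T} \<Longrightarrow> norm (e s) \<le> norm (e t\<^sub>m)"
      by blast
    have "norm (e t\<^sub>m) \<le> \<epsilon> * norm (e t\<^sub>m) * K"
      using zero_output_state_norm_le[OF lower c small e' zero_output max t\<^sub>m]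
      by (simp add: K_def X_def mult.assoc)
    also have "\<dots> \<le> norm (e t\<^sub>m) / 2"
      using mult_left_mono[OF \<epsilon>(2) norm_ge_zero[of "e t\<^sub>m"]] by (simp add: mult_ac)
    finally have "norm (e t\<^sub>m) = 0"
      by simp
    then show "e t = 0"
      using max[OF t] by simp
  qed
  with \<epsilon>(1) show thesis
    by (rule that)
qed

lemma ctrl_sol_diff_has_vector_derivative:
  assumes "ctrl_sol A B b u T x\<^sub>1" "ctrl_sol A B b u T x\<^sub>2" "t \<in> {0..T}"
  shows "((\<lambda>t. x\<^sub>1 t - x\<^sub>2 t) has_vector_derivative Au A B (u t) *v (x\<^sub>1 t - x\<^sub>2 t)) (at t within {0..T})"
  using has_vector_derivative_diff[of x\<^sub>1 _ _ x\<^sub>2] assms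
  by (fastforce simp: ctrl_sol_def matrix_vector_mult_diff_distrib)

lemma small_input_observable:
  fixes A B :: "real^'n^'n" and b C :: "real^'n"
  assumes obs: "observable_pair C A" and T: "T > 0"
  obtains \<epsilon> where "\<epsilon> > 0"
    and "\<And>u. (\<And>t. t \<in> {0..T} \<Longrightarrow> \<bar>u t\<bar> \<le> \<epsilon>) \<Longrightarrow> observable_input A B b C u T"
proof -
  obtain \<epsilon> where \<epsilon>: "\<epsilon> > 0"
    and zero: "\<And>u e t. (\<And>t. t \<in> {0..T} \<Longrightarrow> \<bar>u t\<bar> \<le> \<epsilon>) \<Longrightarrow>
      (\<And>t. t \<in> {0..T} \<Longrightarrow> (e has_vector_derivative Au A B (u t) *v e t) (at t within {0..T})) \<Longrightarrow>
      (\<And>t. t \<in> {0..T} \<Longrightarrow> C \<bullet> e t = 0) \<Longrightarrow> t \<in> {0..T} \<Longrightarrow> e t = 0"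
    using zero_output_small_input_imp_zero[OF obs T] by blast
  have "observable_input A B b C u T" if small: "\<And>t. t \<in> {0..T} \<Longrightarrow> \<bar>u t\<bar> \<le> \<epsilon>" for u
    unfolding observable_input_def
  proof (intro allI impI ballI)
    fix x\<^sub>1 x\<^sub>2 t
    assume sols: "ctrl_sol A B b u T x\<^sub>1 \<and> ctrl_sol A B b u T x\<^sub>2 \<and> (\<forall>t\<in>{0..T}. C \<bullet> x\<^sub>1 t = C \<bullet> x\<^sub>2 t)"
      and t: "t \<in> {0..T}"
    have "x\<^sub>1 t - x\<^sub>2 t = 0"
    proof (rule zero[where e = "\<lambda>t. x\<^sub>1 t - x\<^sub>2 t", OF small _ _ t])
      show "((\<lambda>t. x\<^sub>1 t - x\<^sub>2 t) has_vector_derivative Au A B (u s) *v (x\<^sub>1 s - x\<^sub>2 s)) (at s within {0..T})"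
        if "s \<in> {0..T}" for s
        using sols that by (blast intro: ctrl_sol_diff_has_vector_derivative)
      show "C \<bullet> (x\<^sub>1 s - x\<^sub>2 s) = 0" if "s \<in> {0..T}" for s
        using sols that by (simp add: inner_diff_right)
    qed
    then show "x\<^sub>1 t = x\<^sub>2 t"
      by simp
  qed
  with \<epsilon> show thesis
    by (rule that)
qed

lemma Cinf_isCont: "Cinf f \<Longrightarrow> isCont f x"
  by (erule Cinf.cases) (simp add: differentiable_imp_continuous_within)

lemma abs_le_SUP_abs:
  fixes f :: "'a::topological_space \<Rightarrow> real"
  assumes "compact K" "continuous_on K f" "x \<in> K"
  shows "\<bar>f x\<bar> \<le> (SUP y\<in>K. \<bar>f y\<bar>)"
proof (rule cSUP_upper[OF assms(3)])
  have "compact ((\<lambda>y. \<bar>f y\<bar>) ` K)"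
    using assms(1,2) by (intro compact_continuous_image continuous_on_rabs)
  then show "bdd_above ((\<lambda>y. \<bar>f y\<bar>) ` K)"
    by (simp add: bounded_imp_bdd_above compact_imp_bounded)
qed

lemma isCont_small_on_ball_in_interior:
  fixes f :: "'a::real_normed_vector \<Rightarrow> real"
  assumes "isCont f 0" "f 0 = 0" "0 \<in> interior K" "\<eta> > 0"
  obtains R where "R > 0" "ball 0 R \<subseteq> K" "\<And>x. x \<in> ball 0 R \<Longrightarrow> \<bar>f x\<bar> < \<eta>"
proof -
  obtain d where "d > 0" and d: "\<And>x. dist x 0 < d \<Longrightarrow> \<bar>f x\<bar> < \<eta>"
    using assms(1,2,4) unfolding continuous_at_eps_delta by (metis dist_real_def diff_zero)
  obtain r where "r > 0" and r: "ball 0 r \<subseteq> K"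
    using assms(3) mem_interior by blast
  show thesis
    by (rule that[of "min d r"]) (use \<open>d > 0\<close> \<open>r > 0\<close> r d in \<open>auto simp: dist_commute\<close>)
qed

theorem proposition3:
  fixes A B :: "real^'n^'n" and C b :: "real^'n"
    and lam :: "real^'n \<Rightarrow> real"
    and S :: "'s::euclidean_space set"
    and L :: "'s \<Rightarrow> real^'n"
    and f :: "'s \<Rightarrow> real \<Rightarrow> 's"
    and K1 :: "(real^'n) set" and K2 :: "(real^'n) set" and K3 :: "'s set"
    and T :: real
  assumes lam_smooth: "Cinf lam" and lam0: "lam 0 = 0"
    and stable: "asympt_stable_origin (cl_field A B b lam)"
    and L_smooth: "\<And>i. Cinf (\<lambda>\<xi>. L \<xi> $ i)"
    and f_smooth: "\<And>u e. e \<in> Basis \<Longrightarrow> Cinf (\<lambda>\<xi>. f \<xi> u \<bullet> e)"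
    and K_sub: "K1 \<subseteq> dom_attr (cl_field A B b lam)" "K3 \<subseteq> S"
    and K_compact: "compact K1" "compact K2" "compact K3"
    and K_semialg: "semialgebraic K1" "semialgebraic K2"
    and obs: "observable_pair C A"
    and int0: "0 \<in> interior K1"
    and T_pos: "T > 0"
  shows "\<exists>R>0. ball 0 R \<subseteq> K1 \<and> (\<exists>\<eta>1>0.
     \<forall>(\<delta>::real^'n \<Rightarrow> real) xh eps xi om.
       Cinf \<delta> \<and> \<delta> 0 = 0 \<and> (SUP x\<in>K1. \<bar>\<delta> x\<bar>) < \<eta>1 \<and>
       xh 0 \<in> ball 0 R \<and> xi 0 \<in> S \<and> om 0 \<in> sphere 0 1 \<and>
       (\<forall>t\<in>{0..T}. xi t \<in> S) \<and>
       (\<forall>t\<in>{0..T}.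
          (xh has_vector_derivative
             (Au A B (lam (xh t) + \<delta> (xh t)) *v xh t + (lam (xh t) + \<delta> (xh t)) *\<^sub>R b
              - (C \<bullet> eps t) *\<^sub>R L (xi t))) (at t within {0..T}) \<and>
          (eps has_vector_derivative
             (Au A B (lam (xh t) + \<delta> (xh t)) *v eps t - (C \<bullet> eps t) *\<^sub>R L (xi t)))
             (at t within {0..T}) \<and>
          (xi has_vector_derivative f (xi t) (lam (xh t) + \<delta> (xh t))) (at t within {0..T}) \<and>
          (om has_vector_derivative Au A B (lam (xh t) + \<delta> (xh t)) *v om t)
             (at t within {0..T})) \<and>
       (\<forall>t\<in>{0..T}. xh t \<in> ball 0 R)
       \<longrightarrow> observable_input A B b C (\<lambda>t. lam (xh t) + \<delta> (xh t)) T)"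
proof -
  obtain \<epsilon> where "\<epsilon> > 0"
    and small_observable: "\<And>u. (\<And>t. t \<in> {0..T} \<Longrightarrow> \<bar>u t\<bar> \<le> \<epsilon>) \<Longrightarrow> observable_input A B b C u T"
    using small_input_observable[OF obs T_pos] by blast
  obtain R where "R > 0" and R_K1: "ball 0 R \<subseteq> K1"
    and lam_small: "\<And>x. x \<in> ball 0 R \<Longrightarrow> \<bar>lam x\<bar> < \<epsilon> / 2"
    using isCont_small_on_ball_in_interior[OF Cinf_isCont[OF lam_smooth] lam0 int0] \<open>\<epsilon> > 0\<close>
    by (metis half_gt_zero)
  have "observable_input A B b C (\<lambda>t. lam (xh t) + \<delta> (xh t)) T"
    if "Cinf \<delta>" "(SUP x\<in>K1. \<bar>\<delta> x\<bar>) < \<epsilon> / 2" "\<forall>t\<in>{0..T}. xh t \<in> ball 0 R"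
    for \<delta> :: "real^'n \<Rightarrow> real" and xh
  proof (rule small_observable)
    fix t assume "t \<in> {0..T}"
    with that(3) R_K1 have "xh t \<in> ball 0 R" "xh t \<in> K1"
      by auto
    moreover have "\<bar>\<delta> (xh t)\<bar> \<le> (SUP x\<in>K1. \<bar>\<delta> x\<bar>)"
      using that(1) \<open>xh t \<in> K1\<close> Cinf_isCont
      by (intro abs_le_SUP_abs[OF K_compact(1)] continuous_at_imp_continuous_on) blast
    ultimately show "\<bar>lam (xh t) + \<delta> (xh t)\<bar> \<le> \<epsilon>"
      using lam_small that(2) by fastforce
  qed
  then show ?thesis
    using \<open>R > 0\<close> R_K1 \<open>\<epsilon> > 0\<close> by (intro exI[of _ R] conjI exI[of _ "\<epsilon> / 2"]) auto
qed

end
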